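(* Let $n,m\ge 3$ and let $G$ be the disjoint union of an $n$-cycle $L$ and an $m$-cycle $L'$. Then the mean squared linking number $E[\mathrm{lk}(L,L')^2]$ of a random linear embedding of $G$ in the cube $C^3=[0,1]^3$ equals $\frac{1}{2}nmq$, where $q$ is the constant defined in the context.
   Context: A random linear embedding of a graph $G$ in $C^3=[0,1]^3$: the vertices of $G$ are placed at independent uniformly distributed points of $C^3$, and each edge $(v_i,v_j)$ is realized as the straight segment between $v_i$ and $v_j$. For two oriented segments $l,l'$ in $\mathbb{R}^3$, the signed crossing $\epsilon(l,l')$ is computed in the orthogonal projection onto a fixed plane (e.g. the $xy$-plane): it is $0$ if the projections do not cross, and otherwise $\pm1$ according to the usual right-hand sign convention for the crossing. The linking number of two disjoint oriented polygons is $\frac12$ the sum of $\epsilon(l,l')$ over all edges $l$ of the first and $l'$ of the second. Let $A,B,C,P,Q,R$ be independent uniform points in $C^3$ and write $X\to Y$ for the oriented segment from $X$ to $Y$. Define $s$ by $2s=P(\epsilon(A\to B,P\to Q)\neq 0)$; $u=E[\epsilon(A\to B,P\to Q)\,\epsilon(A\to B,Q\to R)]$; $v=E[\epsilon(A\to B,P\to Q)\,\epsilon(B\to C,Q\to R)]$; and $q=s+2(u+v)$ (it is known that $q>0$). *)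

theory Defs
  imports "HOL-Probability.Probability"
begin

type_synonym point3 = "real \<times> real \<times> real"

definition px :: "point3 \<Rightarrow> real" where "px p = fst p"
definition py :: "point3 \<Rightarrow> real" where "py p = fst (snd p)"
definition pz :: "point3 \<Rightarrow> real" where "pz p = snd (snd p)"

definition cube3 :: "point3 set" where
  "cube3 = {0..1} \<times> {0..1} \<times> {0..1}"

definition unif_cube :: "point3 measure" where
  "unif_cube = uniform_measure lborel cube3"

definition cross2 :: "real \<Rightarrow> real \<Rightarrow> real \<Rightarrow> real \<Rightarrow> real" where
  "cross2 ux uy wx wy = ux * wy - uy * wx"

text \<open>Signed crossing of the oriented segments a->b and c->d in the orthogonal
  projection onto the xy-plane (viewed from +z).  The projections are
  a + s(b-a) and c + t(d-c); they cross iff the solution (s,t) lies in [0,1]^2.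
  At the crossing the sign is +1 iff the over-strand's direction crossed with
  the under-strand's direction has positive z-component (right-hand rule).
  Degenerate configurations (parallel projections, equal heights) give 0;
  they have probability zero.\<close>
definition eps :: "point3 \<Rightarrow> point3 \<Rightarrow> point3 \<Rightarrow> point3 \<Rightarrow> real" where
  "eps a b c d =
    (let ux = px b - px a; uy = py b - py a;
         wx = px d - px c; wy = py d - py c;
         rx = px c - px a; ry = py c - py a;
         D = cross2 ux uy wx wy
     in if D = 0 then 0 else
       (let s = cross2 rx ry wx wy / D; t = cross2 rx ry ux uy / D
        in if 0 \<le> s \<and> s \<le> 1 \<and> 0 \<le> t \<and> t \<le> 1
           then sgn D * sgn ((pz a + s * (pz b - pz a)) - (pz c + t * (pz d - pz c)))
           else 0))"

definition linking_number :: "nat \<Rightarrow> (nat \<Rightarrow> point3) \<Rightarrow> nat \<Rightarrow> (nat \<Rightarrow> point3) \<Rightarrow> real" where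
  "linking_number n X m Y =
     (1/2) * (\<Sum>i<n. \<Sum>j<m. eps (X i) (X (Suc i mod n)) (Y j) (Y (Suc j mod m)))"

text \<open>Random linear embedding of the disjoint union of an n-cycle and an m-cycle:
  n + m independent uniform points in the cube.\<close>
definition embed_space :: "nat \<Rightarrow> nat \<Rightarrow> ((nat \<Rightarrow> point3) \<times> (nat \<Rightarrow> point3)) measure" where
  "embed_space n m = (PiM {..<n} (\<lambda>_. unif_cube)) \<Otimes>\<^sub>M (PiM {..<m} (\<lambda>_. unif_cube))"

text \<open>Six independent uniform points A,B,C,P,Q,R = w 0, ..., w 5.\<close>
definition six_space :: "(nat \<Rightarrow> point3) measure" where
  "six_space = PiM {..<6} (\<lambda>_. unif_cube)"

definition const_s :: real where
  "const_s = measure six_space {w \<in> space six_space. eps (w 0) (w 1) (w 3) (w 4) \<noteq> 0} / 2"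

definition const_u :: real where
  "const_u = (\<integral>w. eps (w 0) (w 1) (w 3) (w 4) * eps (w 0) (w 1) (w 4) (w 5) \<partial>six_space)"

definition const_v :: real where
  "const_v = (\<integral>w. eps (w 0) (w 1) (w 3) (w 4) * eps (w 1) (w 2) (w 4) (w 5) \<partial>six_space)"

definition const_q :: real where
  "const_q = const_s + 2 * (const_u + const_v)"

end

theory Submission
  imports Defs "HOL-Combinatorics.Transposition"
begin

text \<open>Expanding the square, the mean squared linking number is 1/4 of the sum, over edges
  e, e' of the first cycle and f, f' of the second, of E[eps(e,f) eps(e',f')]. If e' is neither
  e nor adjacent to e, exchanging the two endpoints of e' preserves the distribution of the
  vertices, fixes eps(e,f) and negates eps(e',f'), so the term vanishes; likewise for f'.
  Each remaining term involves at most six distinct, hence independent uniform, vertices, and by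
  the symmetries of eps it equals 2s (e = e', f = f'), u (one pair equal, the other adjacent) or
  v (both pairs adjacent). There are nm, 4nm and 4nm terms of these kinds, so the sum is
  nm(2s + 4u + 4v)/4 = nmq/2.\<close>

lemma prob_space_unif_cube: "prob_space unif_cube"
proof -
  have cube: "cube3 = cbox (0, 0, 0) (1, 1, 1)"
    by (simp add: cube3_def cbox_Pair_eq)
  have "emeasure lborel cube3 = 1"
    unfolding cube by (simp add: emeasure_lborel_cbox_eq Basis_prod_def inner_prod_def)
  then show ?thesis
    unfolding unif_cube_def by (intro prob_space_uniform_measure) simp_all
qed

lemma sets_unif_cube [measurable_cong, simp]: "sets unif_cube = sets borel"
  by (simp add: unif_cube_def)

lemma space_unif_cube [simp]: "space unif_cube = UNIV"
  by (simp add: unif_cube_def)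

lemma borel_measurable_eps [measurable]:
  assumes [measurable]: "a \<in> borel_measurable M" "b \<in> borel_measurable M"
    "c \<in> borel_measurable M" "d \<in> borel_measurable M"
  shows "(\<lambda>x. eps (a x) (b x) (c x) (d x)) \<in> borel_measurable M"
proof -
  have [measurable]: "px \<in> borel_measurable borel" "py \<in> borel_measurable borel" "pz \<in> borel_measurable borel"
    unfolding px_def py_def pz_def by (intro borel_measurable_continuous_onI continuous_intros)+
  show ?thesis
    unfolding eps_def Let_def cross2_def by measurable
qed

lemma eps_cases: "eps a b c d \<in> {-1, 0, 1}"
  by (auto simp: eps_def Let_def sgn_real_def)

lemma eps_swap: "eps c d a b = eps a b c d"
proof -
  define D where "D = cross2 (px b - px a) (py b - py a) (px d - px c) (py d - py c)"
  define s where "s = cross2 (px c - px a) (py c - py a) (px d - px c) (py d - py c) / D"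
  define t where "t = cross2 (px c - px a) (py c - py a) (px b - px a) (py b - py a) / D"
  have D': "cross2 (px d - px c) (py d - py c) (px b - px a) (py b - py a) = - D"
    unfolding D_def cross2_def by algebra
  have s': "cross2 (px a - px c) (py a - py c) (px b - px a) (py b - py a) / - D = t"
    unfolding t_def cross2_def by (cases "D = 0") (simp_all add: field_simps)
  have t': "cross2 (px a - px c) (py a - py c) (px d - px c) (py d - py c) / - D = s"
    unfolding s_def cross2_def by (cases "D = 0") (simp_all add: field_simps)
  have "sgn (pz c + t * (pz d - pz c) - (pz a + s * (pz b - pz a)))
      = - sgn (pz a + s * (pz b - pz a) - (pz c + t * (pz d - pz c)))"
    by (metis minus_diff_eq sgn_minus)
  then show ?thesis
    unfolding eps_def Let_def D' s' t' D_def[symmetric] s_def[symmetric] t_def[symmetric]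
    by (auto simp: sgn_minus)
qed

lemma eps_reverse_left: "eps b a c d = - eps a b c d"
proof -
  define D where "D = cross2 (px b - px a) (py b - py a) (px d - px c) (py d - py c)"
  define s where "s = cross2 (px c - px a) (py c - py a) (px d - px c) (py d - py c) / D"
  define t where "t = cross2 (px c - px a) (py c - py a) (px b - px a) (py b - py a) / D"
  have D': "cross2 (px a - px b) (py a - py b) (px d - px c) (py d - py c) = - D"
    unfolding D_def cross2_def by algebra
  show ?thesis
  proof (cases "D = 0")
    case True
    then show ?thesis
      unfolding eps_def Let_def D' D_def[symmetric] by simp
  next
    case False
    have s': "cross2 (px c - px b) (py c - py b) (px d - px c) (py d - py c) / - D = 1 - s"
      using False unfolding s_def D_def cross2_def by (simp add: field_simps)
    have t': "cross2 (px c - px b) (py c - py b) (px a - px b) (py a - py b) / - D = t"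
      using False unfolding t_def D_def cross2_def by (simp add: field_simps)
    have "pz b + (1 - s) * (pz a - pz b) = pz a + s * (pz b - pz a)"
      by (simp add: algebra_simps)
    then show ?thesis
      unfolding eps_def Let_def D' s' t' D_def[symmetric] s_def[symmetric] t_def[symmetric]
      using False by (auto simp: sgn_minus)
  qed
qed

lemma eps_reverse_right: "eps a b d c = - eps a b c d"
  by (metis eps_swap eps_reverse_left)

lemma integral_PiM_reindex:
  fixes H :: "('i \<Rightarrow> 'a) \<Rightarrow> real"
  assumes M: "prob_space M" and h: "inj_on h J" "h ` J \<subseteq> I"
    and H: "H \<in> borel_measurable (PiM J (\<lambda>_. M))"
  shows "(\<integral>z. H (\<lambda>t\<in>J. z (h t)) \<partial>PiM I (\<lambda>_. M)) = (\<integral>w. H w \<partial>PiM J (\<lambda>_. M))"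
proof -
  have "distr (PiM I (\<lambda>_. M)) (PiM J (\<lambda>_. M)) (\<lambda>z. \<lambda>t\<in>J. z (h t)) = PiM J (\<lambda>_. M)"
    using distr_PiM_reindex[of I "\<lambda>_. M" h J] M h by auto
  moreover have "(\<lambda>z. \<lambda>t\<in>J. z (h t)) \<in> measurable (PiM I (\<lambda>_. M)) (PiM J (\<lambda>_. M))"
    using h(2) by (intro measurable_restrict measurable_component_singleton) auto
  ultimately show ?thesis
    using integral_distr[OF _ H] by metis
qed

lemma integral_PiM_eq_0_if_transpose_negates:
  fixes G :: "('i \<Rightarrow> 'a) \<Rightarrow> real"
  assumes "prob_space M" "a \<in> I" "b \<in> I" and G: "G \<in> borel_measurable (PiM I (\<lambda>_. M))"
    and negates: "\<And>z. G (\<lambda>t\<in>I. z (Transposition.transpose a b t)) = - G z"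
  shows "(\<integral>z. G z \<partial>PiM I (\<lambda>_. M)) = 0"
proof -
  have "(\<integral>z. G (\<lambda>t\<in>I. z (Transposition.transpose a b t)) \<partial>PiM I (\<lambda>_. M))
      = (\<integral>z. G z \<partial>PiM I (\<lambda>_. M))"
    using assms by (intro integral_PiM_reindex) auto
  then show ?thesis
    by (simp add: negates)
qed

definition join_points :: "nat \<Rightarrow> nat \<Rightarrow> (nat \<Rightarrow> 'a) \<times> (nat \<Rightarrow> 'a) \<Rightarrow> nat \<Rightarrow> 'a" where
  "join_points n m p = merge {..<n} {n..<n+m} (fst p, \<lambda>t\<in>{n..<n+m}. snd p (t - n))"

lemma integral_pair_PiM_join_points:
  fixes G :: "(nat \<Rightarrow> 'a) \<Rightarrow> real"
  assumes M: "prob_space M" and G: "G \<in> borel_measurable (PiM {..<n+m} (\<lambda>_. M))"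
  shows "(\<integral>p. G (join_points n m p) \<partial>(PiM {..<n} (\<lambda>_. M) \<Otimes>\<^sub>M PiM {..<m} (\<lambda>_. M)))
    = (\<integral>z. G z \<partial>PiM {..<n+m} (\<lambda>_. M))"
proof -
  interpret product_prob_space "\<lambda>_. M"
    using M by (simp add: product_prob_space_def product_prob_space_axioms_def
        product_sigma_finite_def prob_space_imp_sigma_finite)
  define P1 where "P1 = PiM {..<n} (\<lambda>_. M)"
  define P2 where "P2 = PiM {..<m} (\<lambda>_. M)"
  define PJ where "PJ = PiM {n..<n+m} (\<lambda>_. M)"
  define shift where "shift = (\<lambda>y. \<lambda>t\<in>{n..<n+m}. (y::nat \<Rightarrow> 'a) (t - n))"
  have U: "{..<n} \<union> {n..<n+m} = {..<n+m}" by auto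
  have distr_merge': "distr (P1 \<Otimes>\<^sub>M PJ) (PiM {..<n+m} (\<lambda>_. M)) (merge {..<n} {n..<n+m}) = PiM {..<n+m} (\<lambda>_. M)"
  proof -
    have "{..<n} \<inter> {n..<n+m} = {}" by auto
    then show ?thesis using distr_merge[of "{..<n}" "{n..<n+m}"] unfolding P1_def PJ_def U by simp
  qed
  have merge_measurable: "merge {..<n} {n..<n+m} \<in> measurable (P1 \<Otimes>\<^sub>M PJ) (PiM {..<n+m} (\<lambda>_. M))"
    using measurable_merge[of "{..<n}" "{n..<n+m}" "\<lambda>_. M"] unfolding P1_def PJ_def U .
  have shift_measurable: "shift \<in> measurable P2 PJ"
    unfolding P2_def PJ_def shift_def by (intro measurable_restrict measurable_component_singleton) auto
  have "inj_on (\<lambda>t. t - n) {n..<n+m}" "(\<lambda>t. t - n) \<in> {n..<n+m} \<rightarrow> {..<m}"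
    by (auto simp: inj_on_def)
  then have shift_preserving: "distr P2 PJ shift = PJ"
    using distr_PiM_reindex[of "{..<m}" "\<lambda>_. M" "\<lambda>t. t - n" "{n..<n+m}"] M
    by (simp add: P2_def PJ_def shift_def)
  moreover have "distr P1 P1 (\<lambda>x. x) \<Otimes>\<^sub>M distr P2 PJ shift
      = distr (P1 \<Otimes>\<^sub>M P2) (P1 \<Otimes>\<^sub>M PJ) (\<lambda>(x, y). (x, shift y))"
    by (rule pair_measure_distr[OF measurable_ident_sets[OF refl] shift_measurable])
      (simp only: shift_preserving, simp add: PJ_def prob_space_imp_sigma_finite prob_space_PiM M)
  ultimately have distr_shift: "distr (P1 \<Otimes>\<^sub>M P2) (P1 \<Otimes>\<^sub>M PJ) (\<lambda>(x, y). (x, shift y)) = P1 \<Otimes>\<^sub>M PJ"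
    by simp
  have shift_pair_measurable: "(\<lambda>(x, y). (x, shift y)) \<in> measurable (P1 \<Otimes>\<^sub>M P2) (P1 \<Otimes>\<^sub>M PJ)"
    using shift_measurable by measurable
  have "(\<integral>z. G z \<partial>PiM {..<n+m} (\<lambda>_. M)) = (\<integral>q. G (merge {..<n} {n..<n+m} q) \<partial>(P1 \<Otimes>\<^sub>M PJ))"
    by (subst distr_merge'[symmetric]) (rule integral_distr[OF merge_measurable G])
  also have "\<dots> = (\<integral>p. G (merge {..<n} {n..<n+m} ((\<lambda>(x, y). (x, shift y)) p)) \<partial>(P1 \<Otimes>\<^sub>M P2))"
    by (subst distr_shift[symmetric])
      (rule integral_distr[OF shift_pair_measurable measurable_compose[OF merge_measurable G]])
  finally show ?thesis
    by (simp add: join_points_def P1_def P2_def shift_def split_beta)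
qed

lemma measurable_unif_cube_component:
  "i \<in> I \<Longrightarrow> (\<lambda>z. z i) \<in> borel_measurable (PiM I (\<lambda>_. unif_cube))"
  using measurable_component_singleton[of i I "\<lambda>_. unif_cube"] measurable_cong_sets[OF refl sets_unif_cube]
  by blast

lemma integral_six_points:
  fixes F :: "(nat \<Rightarrow> point3) \<Rightarrow> real"
  assumes as: "distinct as" "length as = 6" "set as \<subseteq> I"
    and H: "H \<in> borel_measurable six_space"
    and F: "\<And>z. F z = H (\<lambda>t\<in>{..<6}. z (as ! t))"
  shows "(\<integral>z. F z \<partial>PiM I (\<lambda>_. unif_cube)) = (\<integral>w. H w \<partial>six_space)"
  unfolding F six_space_def
proof (rule integral_PiM_reindex[OF prob_space_unif_cube])
  show "inj_on ((!) as) {..<6}" "(!) as ` {..<6} \<subseteq> I"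
    using as by (auto simp: inj_on_nth)
qed (use H six_space_def in simp)

text \<open>A configuration z places the n-cycle at z 0, ..., z (n - 1) and the m-cycle at
  z n, ..., z (n + m - 1).\<close>

definition edge_crossing :: "nat \<Rightarrow> nat \<Rightarrow> (nat \<Rightarrow> point3) \<Rightarrow> nat \<Rightarrow> nat \<Rightarrow> real" where
  "edge_crossing n m z i j = eps (z i) (z (Suc i mod n)) (z (n + j)) (z (n + Suc j mod m))"

lemma linking_number_join_points:
  "linking_number n (fst p) m (snd p) = 1/2 * (\<Sum>i<n. \<Sum>j<m. edge_crossing n m (join_points n m p) i j)"
  unfolding linking_number_def
proof (intro arg_cong[where f = "\<lambda>x. 1/2 * x"] sum.cong refl)
  fix i j assume "i \<in> {..<n}" "j \<in> {..<m}"
  then have "Suc i mod n < n" "Suc j mod m < m" by auto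
  with \<open>i \<in> {..<n}\<close> \<open>j \<in> {..<m}\<close>
  show "eps (fst p i) (fst p (Suc i mod n)) (snd p j) (snd p (Suc j mod m))
      = edge_crossing n m (join_points n m p) i j"
    by (simp add: edge_crossing_def join_points_def merge_def)
qed

lemma borel_measurable_edge_crossing:
  assumes "i < n" "j < m"
  shows "(\<lambda>z. edge_crossing n m z i j) \<in> borel_measurable (PiM {..<n+m} (\<lambda>_. unif_cube))"
proof -
  have "i < n + m" "Suc i mod n < n + m" "n + j < n + m" "n + Suc j mod m < n + m"
    using assms by (auto intro: less_le_trans[OF mod_less_divisor])
  then show ?thesis
    unfolding edge_crossing_def by (intro borel_measurable_eps measurable_unif_cube_component) auto
qed

lemma integrable_edge_crossing_product:
  assumes "i < n" "j < m" "k < n" "l < m"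
  shows "integrable (PiM {..<n+m} (\<lambda>_. unif_cube))
    (\<lambda>z. edge_crossing n m z i j * edge_crossing n m z k l)"
proof (rule finite_measure.integrable_const_bound[where B = 1])
  show "finite_measure (PiM {..<n+m} (\<lambda>_. unif_cube))"
    by (simp add: prob_space_PiM prob_space_unif_cube prob_space.finite_measure)
  show "AE z in PiM {..<n+m} (\<lambda>_. unif_cube). norm (edge_crossing n m z i j * edge_crossing n m z k l) \<le> 1"
  proof (intro AE_I2)
    fix z
    have "\<bar>eps a b c d\<bar> \<le> 1" for a b c d
      using eps_cases[of a b c d] by auto
    then show "norm (edge_crossing n m z i j * edge_crossing n m z k l) \<le> 1"
      by (simp add: edge_crossing_def abs_mult mult_le_one)
  qed
qed (use assms borel_measurable_edge_crossing in simp)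

definition crossing_moment :: "nat \<Rightarrow> nat \<Rightarrow> nat \<Rightarrow> nat \<Rightarrow> nat \<Rightarrow> nat \<Rightarrow> real" where
  "crossing_moment n m i j k l =
    (\<integral>z. edge_crossing n m z i j * edge_crossing n m z k l \<partial>PiM {..<n+m} (\<lambda>_. unif_cube))"

datatype edge_relation = Same | Adjacent | Apart

definition cycle_edge_relation :: "nat \<Rightarrow> nat \<Rightarrow> nat \<Rightarrow> edge_relation" where
  "cycle_edge_relation n i k =
    (if k = i then Same else if k = Suc i mod n \<or> i = Suc k mod n then Adjacent else Apart)"

lemma Suc_mod_inj: "i < n \<Longrightarrow> k < n \<Longrightarrow> Suc i mod n = Suc k mod n \<Longrightarrow> i = k"
  by (auto simp: mod_Suc split: if_splits)

lemma consecutive_vertices: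
  assumes "3 \<le> n" "i < n"
  shows "distinct [i, Suc i mod n, Suc (Suc i mod n) mod n]" "Suc i mod n < n" "Suc (Suc i mod n) mod n < n"
  using assms by (auto simp: mod_Suc)

lemma crossing_moment_apart_left:
  assumes "i < n" "j < m" "k < n" "l < m" "cycle_edge_relation n i k = Apart"
  shows "crossing_moment n m i j k l = 0"
  \<comment> \<open>Exchanging the endpoints of edge k reverses it and does not touch edge i.\<close>
  unfolding crossing_moment_def
proof (rule integral_PiM_eq_0_if_transpose_negates[OF prob_space_unif_cube, of k _ "Suc k mod n"])
  have apart: "k \<noteq> i" "k \<noteq> Suc i mod n" "i \<noteq> Suc k mod n" "Suc i mod n \<noteq> Suc k mod n"
    using assms Suc_mod_inj by (auto simp: cycle_edge_relation_def split: if_splits)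
  have bounds: "Suc i mod n < n" "Suc k mod n < n" "Suc j mod m < m" "Suc l mod m < m"
    using assms by auto
  show "k \<in> {..<n+m}" "Suc k mod n \<in> {..<n+m}"
    unfolding lessThan_iff using assms(3) bounds(2) by linarith+
  show "(\<lambda>z. edge_crossing n m z i j * edge_crossing n m z k l) \<in> borel_measurable (PiM {..<n+m} (\<lambda>_. unif_cube))"
    using assms by (intro borel_measurable_times borel_measurable_edge_crossing)
  fix z :: "nat \<Rightarrow> point3"
  define z' where "z' = (\<lambda>t\<in>{..<n+m}. z (Transposition.transpose k (Suc k mod n) t))"
  have "z' i = z i" "z' (Suc i mod n) = z (Suc i mod n)" "z' k = z (Suc k mod n)"
    "z' (Suc k mod n) = z k" "z' (n + j) = z (n + j)" "z' (n + Suc j mod m) = z (n + Suc j mod m)"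
    "z' (n + l) = z (n + l)" "z' (n + Suc l mod m) = z (n + Suc l mod m)"
    using assms apart bounds by (auto simp: z'_def Transposition.transpose_def simp del: mod_less_divisor)
  then show "edge_crossing n m z' i j * edge_crossing n m z' k l
      = - (edge_crossing n m z i j * edge_crossing n m z k l)"
    by (simp add: edge_crossing_def eps_reverse_left[of "z (Suc k mod n)"])
qed

lemma crossing_moment_apart_right:
  assumes "i < n" "j < m" "k < n" "l < m" "cycle_edge_relation m j l = Apart"
  shows "crossing_moment n m i j k l = 0"
  unfolding crossing_moment_def
proof (rule integral_PiM_eq_0_if_transpose_negates[OF prob_space_unif_cube, of "n + l" _ "n + Suc l mod m"])
  have apart: "l \<noteq> j" "l \<noteq> Suc j mod m" "j \<noteq> Suc l mod m" "Suc j mod m \<noteq> Suc l mod m"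
    using assms Suc_mod_inj by (auto simp: cycle_edge_relation_def split: if_splits)
  have bounds: "Suc i mod n < n" "Suc k mod n < n" "Suc j mod m < m" "Suc l mod m < m"
    using assms by auto
  show "n + l \<in> {..<n+m}" "n + Suc l mod m \<in> {..<n+m}"
    using assms(4) bounds(4) by auto
  show "(\<lambda>z. edge_crossing n m z i j * edge_crossing n m z k l) \<in> borel_measurable (PiM {..<n+m} (\<lambda>_. unif_cube))"
    using assms by (intro borel_measurable_times borel_measurable_edge_crossing)
  fix z :: "nat \<Rightarrow> point3"
  define z' where "z' = (\<lambda>t\<in>{..<n+m}. z (Transposition.transpose (n + l) (n + Suc l mod m) t))"
  have "z' i = z i" "z' (Suc i mod n) = z (Suc i mod n)" "z' k = z k"
    "z' (Suc k mod n) = z (Suc k mod n)" "z' (n + j) = z (n + j)" "z' (n + Suc j mod m) = z (n + Suc j mod m)"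
    "z' (n + l) = z (n + Suc l mod m)" "z' (n + Suc l mod m) = z (n + l)"
    using assms apart bounds by (auto simp: z'_def Transposition.transpose_def simp del: mod_less_divisor)
  then show "edge_crossing n m z' i j * edge_crossing n m z' k l
      = - (edge_crossing n m z i j * edge_crossing n m z k l)"
    by (simp add: edge_crossing_def eps_reverse_right[of _ _ "z (n + Suc l mod m)"])
qed

lemma integral_eps_square: "(\<integral>w. eps (w 0) (w 1) (w 3) (w 4) * eps (w 0) (w 1) (w 3) (w 4) \<partial>six_space) = 2 * const_s"
proof -
  let ?A = "{w \<in> space six_space. eps (w 0) (w 1) (w 3) (w 4) \<noteq> 0}"
  have "(\<integral>w. eps (w 0) (w 1) (w 3) (w 4) * eps (w 0) (w 1) (w 3) (w 4) \<partial>six_space)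
      = (\<integral>w. indicator ?A w \<partial>six_space)"
  proof (intro Bochner_Integration.integral_cong refl)
    fix w
    show "eps (w 0) (w 1) (w 3) (w 4) * eps (w 0) (w 1) (w 3) (w 4) = indicator ?A w"
      if "w \<in> space six_space"
      using that eps_cases[of "w 0" "w 1" "w 3" "w 4"] by (auto simp: indicator_def)
  qed
  also have "\<dots> = measure six_space ?A"
    by (simp add: Int_absorb2)
  finally show ?thesis
    by (simp add: const_s_def)
qed

lemma borel_measurable_six_space_eps:
  assumes "a < 6" "b < 6" "c < 6" "d < 6"
  shows "(\<lambda>w. eps (w a) (w b) (w c) (w d)) \<in> borel_measurable six_space"
  using assms unfolding six_space_def by (intro borel_measurable_eps measurable_unif_cube_component) auto

context
  fixes n m i j :: nat
  assumes n: "3 \<le> n" "i < n" and m: "3 \<le> m" "j < m"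
begin

lemma six_points_distinct:
  "distinct [i, Suc i mod n, Suc (Suc i mod n) mod n, n + j, n + Suc j mod m, n + Suc (Suc j mod m) mod m]"
  "distinct [n + j, n + Suc j mod m, n + Suc (Suc j mod m) mod m, i, Suc i mod n, Suc (Suc i mod n) mod n]"
  "distinct [Suc (Suc i mod n) mod n, Suc i mod n, i, n + j, n + Suc j mod m, n + Suc (Suc j mod m) mod m]"
  using consecutive_vertices[OF n] consecutive_vertices[OF m] n m by (auto simp del: mod_less_divisor)

lemma six_points_bounded:
  "{i, Suc i mod n, Suc (Suc i mod n) mod n, n + j, n + Suc j mod m, n + Suc (Suc j mod m) mod m} \<subseteq> {..<n+m}"
  using consecutive_vertices[OF n] consecutive_vertices[OF m] n m by (auto simp del: mod_less_divisor)

lemma crossing_moment_same_same: "crossing_moment n m i j i j = 2 * const_s"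
  unfolding crossing_moment_def integral_eps_square[symmetric]
  by (rule integral_six_points[OF six_points_distinct(1) _ _ borel_measurable_times])
    (use six_points_bounded in \<open>auto simp: edge_crossing_def intro!: borel_measurable_six_space_eps\<close>)

lemma crossing_moment_same_next: "crossing_moment n m i j i (Suc j mod m) = const_u"
  unfolding crossing_moment_def const_u_def
  by (rule integral_six_points[OF six_points_distinct(1) _ _ borel_measurable_times])
    (use six_points_bounded in \<open>auto simp: edge_crossing_def intro!: borel_measurable_six_space_eps\<close>)

lemma crossing_moment_next_same: "crossing_moment n m i j (Suc i mod n) j = const_u"
  unfolding crossing_moment_def const_u_def
  by (rule integral_six_points[OF six_points_distinct(2) _ _ borel_measurable_times])
    (use six_points_bounded in \<open>auto simp: edge_crossing_def
        eps_swap[of "z (n + j)" "z (n + Suc j mod m)" for z] intro!: borel_measurable_six_space_eps\<close>)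

lemma crossing_moment_next_next: "crossing_moment n m i j (Suc i mod n) (Suc j mod m) = const_v"
  unfolding crossing_moment_def const_v_def
  by (rule integral_six_points[OF six_points_distinct(1) _ _ borel_measurable_times])
    (use six_points_bounded in \<open>auto simp: edge_crossing_def intro!: borel_measurable_six_space_eps\<close>)

lemma crossing_moment_next_prev: "crossing_moment n m i (Suc j mod m) (Suc i mod n) j = const_v"
  \<comment> \<open>Listing the vertices of the first path backwards reverses both of its edges.\<close>
  unfolding crossing_moment_def const_v_def
  by (rule integral_six_points[OF six_points_distinct(3) _ _ borel_measurable_times])
    (use six_points_bounded in \<open>auto simp: edge_crossing_def mult.commute
        eps_reverse_left[of "z (Suc (Suc i mod n) mod n)" "z (Suc i mod n)" for z]
        eps_reverse_left[of "z (Suc i mod n)" "z i" for z] intro!: borel_measurable_six_space_eps\<close>)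

end

fun pair_moment :: "edge_relation \<Rightarrow> edge_relation \<Rightarrow> real" where
  "pair_moment Same Same = 2 * const_s"
| "pair_moment Same Adjacent = const_u"
| "pair_moment Adjacent Same = const_u"
| "pair_moment Adjacent Adjacent = const_v"
| "pair_moment _ _ = 0"

lemma cycle_edge_relation_commute: "cycle_edge_relation n k i = cycle_edge_relation n i k"
  by (auto simp: cycle_edge_relation_def)

lemma crossing_moment_commute: "crossing_moment n m k l i j = crossing_moment n m i j k l"
  by (simp add: crossing_moment_def mult.commute)

lemma crossing_moment_eq_pair_moment_oriented:
  assumes "3 \<le> n" "3 \<le> m" "i < n" "j < m" "l < m"
    and "k = i \<or> k = Suc i mod n" and "cycle_edge_relation m j l \<noteq> Apart"
  shows "crossing_moment n m i j k l = pair_moment (cycle_edge_relation n i k) (cycle_edge_relation m j l)"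
proof -
  have "i \<noteq> Suc i mod n" "j \<noteq> Suc j mod m" "l \<noteq> Suc l mod m"
    using consecutive_vertices assms by (metis distinct_length_2_or_more)+
  from assms(6,7) consider
      "k = i" "l = j" | "k = i" "l = Suc j mod m" | "k = i" "j = Suc l mod m"
    | "k = Suc i mod n" "l = j" | "k = Suc i mod n" "l = Suc j mod m" | "k = Suc i mod n" "j = Suc l mod m"
    by (auto simp: cycle_edge_relation_def split: if_splits)
  then show ?thesis
  proof cases
    case 3
    then show ?thesis
      using crossing_moment_same_next[of n i m l] crossing_moment_commute[of n m i j i l] assms
        \<open>l \<noteq> Suc l mod m\<close>
      by (simp add: cycle_edge_relation_def)
  next
    case 6
    then show ?thesis
      using crossing_moment_next_prev[of n i m l] assms \<open>i \<noteq> Suc i mod n\<close> \<open>l \<noteq> Suc l mod m\<close>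
      by (simp add: cycle_edge_relation_def)
  qed (use assms \<open>i \<noteq> Suc i mod n\<close> \<open>j \<noteq> Suc j mod m\<close> crossing_moment_same_same
      crossing_moment_same_next crossing_moment_next_same crossing_moment_next_next
      in \<open>auto simp: cycle_edge_relation_def\<close>)
qed

lemma crossing_moment_eq_pair_moment:
  assumes "3 \<le> n" "3 \<le> m" "i < n" "j < m" "k < n" "l < m"
  shows "crossing_moment n m i j k l = pair_moment (cycle_edge_relation n i k) (cycle_edge_relation m j l)"
proof (cases "cycle_edge_relation n i k = Apart \<or> cycle_edge_relation m j l = Apart")
  case True
  then show ?thesis
  proof (elim disjE)
    assume "cycle_edge_relation n i k = Apart"
    then show ?thesis
      using assms crossing_moment_apart_left by simp
  next
    assume "cycle_edge_relation m j l = Apart"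
    then show ?thesis
      using assms crossing_moment_apart_right by (cases "cycle_edge_relation n i k") simp_all
  qed
next
  case False
  then consider "k = i \<or> k = Suc i mod n" | "i = Suc k mod n"
    by (auto simp: cycle_edge_relation_def split: if_splits)
  then show ?thesis
  proof cases
    case 1
    then show ?thesis
      using assms False by (intro crossing_moment_eq_pair_moment_oriented) auto
  next
    case 2
    then have "crossing_moment n m k l i j = pair_moment (cycle_edge_relation n k i) (cycle_edge_relation m l j)"
      using assms False by (intro crossing_moment_eq_pair_moment_oriented) (auto simp: cycle_edge_relation_commute)
    then show ?thesis
      by (simp add: crossing_moment_commute cycle_edge_relation_commute)
  qed
qed

lemma sum_cycle_edge_relation:
  fixes f :: "edge_relation \<Rightarrow> 'a :: comm_semiring_1"
  assumes "3 \<le> n" "i < n" and "f Apart = 0"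
  shows "(\<Sum>k<n. f (cycle_edge_relation n i k)) = f Same + 2 * f Adjacent"
proof -
  define prev where "prev = (if i = 0 then n - 1 else i - 1)"
  have "prev < n" "i = Suc prev mod n"
    using assms(2) by (auto simp: prev_def mod_Suc)
  then have neighbours: "{k \<in> {..<n}. cycle_edge_relation n i k \<noteq> Apart} = {i, Suc i mod n, prev}"
    using assms(2) Suc_mod_inj[of _ n prev] \<open>prev < n\<close>
    by (auto simp: cycle_edge_relation_def)
  have distinct: "distinct [i, Suc i mod n, prev]"
    using consecutive_vertices(1)[OF assms(1) \<open>prev < n\<close>] \<open>i = Suc prev mod n\<close> by auto
  have "(\<Sum>k<n. f (cycle_edge_relation n i k)) = (\<Sum>k\<in>{i, Suc i mod n, prev}. f (cycle_edge_relation n i k))"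
    unfolding neighbours[symmetric] using assms(3) by (intro sum.mono_neutral_right) auto
  also have "\<dots> = f Same + 2 * f Adjacent"
    using distinct \<open>i = Suc prev mod n\<close> by (simp add: cycle_edge_relation_def mult_2)
  finally show ?thesis .
qed

lemma sum_pair_moment:
  assumes "3 \<le> n" "3 \<le> m"
  shows "(\<Sum>i<n. \<Sum>k<n. \<Sum>j<m. \<Sum>l<m. pair_moment (cycle_edge_relation n i k) (cycle_edge_relation m j l))
    = 2 * real n * real m * const_q"
proof -
  have pair_moment_Apart: "pair_moment r Apart = 0" for r
    by (cases r) simp_all
  have "(\<Sum>l<m. pair_moment r (cycle_edge_relation m j l)) = pair_moment r Same + 2 * pair_moment r Adjacent"
    if "j < m" for r j
    using sum_cycle_edge_relation[OF assms(2) that, of "pair_moment r"] pair_moment_Apart by simp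
  then have "(\<Sum>k<n. \<Sum>j<m. \<Sum>l<m. pair_moment (cycle_edge_relation n i k) (cycle_edge_relation m j l))
      = (\<Sum>k<n. real m * (pair_moment (cycle_edge_relation n i k) Same
          + 2 * pair_moment (cycle_edge_relation n i k) Adjacent))"
    for i by simp
  also have "\<dots> i = real m * (2 * const_s + 4 * const_u + 4 * const_v)" if "i < n" for i
    by (subst sum_cycle_edge_relation[OF assms(1) that]) (simp_all add: algebra_simps)
  finally show ?thesis
    by (simp add: const_q_def algebra_simps)
qed

theorem mainTheorem1:
  fixes n m :: nat
  assumes "n \<ge> 3" and "m \<ge> 3"
  shows "(\<integral>\<omega>. (linking_number n (fst \<omega>) m (snd \<omega>))\<^sup>2 \<partial>(embed_space n m))
         = (1/2) * real n * real m * const_q"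
proof -
  let ?M = "PiM {..<n+m} (\<lambda>_. unif_cube)"
  let ?X = "edge_crossing n m"
  define G where "G z = 1/4 * (\<Sum>i<n. \<Sum>k<n. \<Sum>j<m. \<Sum>l<m. ?X z i j * ?X z k l)" for z
  have "(linking_number n (fst p) m (snd p))\<^sup>2 = G (join_points n m p)" for p
    by (simp add: linking_number_join_points G_def power2_eq_square sum_product)
  moreover have "G \<in> borel_measurable ?M"
    unfolding G_def by (intro borel_measurable_times borel_measurable_const borel_measurable_sum
        borel_measurable_edge_crossing) auto
  ultimately have "(\<integral>\<omega>. (linking_number n (fst \<omega>) m (snd \<omega>))\<^sup>2 \<partial>(embed_space n m))
      = (\<integral>z. G z \<partial>?M)"
    unfolding embed_space_def by (simp add: integral_pair_PiM_join_points[OF prob_space_unif_cube])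
  also have "\<dots> = 1/4 * (\<Sum>i<n. \<Sum>k<n. \<Sum>j<m. \<Sum>l<m. crossing_moment n m i j k l)"
    unfolding G_def crossing_moment_def
    by (intro has_bochner_integral_integral_eq has_bochner_integral_mult_right has_bochner_integral_sum
        has_bochner_integral_integrable integrable_edge_crossing_product) auto
  also have "\<dots> = 1/4 * (\<Sum>i<n. \<Sum>k<n. \<Sum>j<m. \<Sum>l<m.
      pair_moment (cycle_edge_relation n i k) (cycle_edge_relation m j l))"
    using assms by (simp add: crossing_moment_eq_pair_moment)
  also have "\<dots> = (1/2) * real n * real m * const_q"
    using sum_pair_moment[OF assms] by simp
  finally show ?thesis .
qed

end
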